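(* Let $x,v$ be positive integers with $xv\ge2$. Let $\lambda=(x,\dots,x)$ with $x$ occurring $v$ times and $\lambda'=(v,\dots,v)$ with $v$ occurring $x$ times. Then the posets $P(\lambda)$ and $P(\lambda')$ are isomorphic.
   Context: For a vector $\mu=(\mu_1,\dots,\mu_d)$ of positive integers with sum $n\ge2$, $\Delta_\mu=\mathrm{conv}(e_1,\dots,e_d,\mu)\subset\mathbb{R}^d$ has fundamental parallelepiped $\Pi_\mu=\{\sum_{i=1}^d\gamma_i(1,e_i)+\gamma_{d+1}(1,\mu):0\le\gamma_i<1\}\subset\mathbb{R}^{d+1}$. $P(\mu)$ is the set $\Pi_\mu\cap\mathbb{Z}^{d+1}$ ordered by $\sigma\preceq\tau$ iff $\tau-\sigma\in\Pi_\mu\cap\mathbb{Z}^{d+1}$. *)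

theory Defs
  imports Complex_Main
begin

text \<open>Points of Z^(d+1) are int lists of
length d+1; coordinate 0 is the first (homogenising) coordinate, coordinate j+1 corresponds
to e_(j+1). The coefficients g 0, ..., g (d-1) are \<gamma>_1..\<gamma>_d (for (1,e_i)) and
g d is \<gamma>_(d+1) (for (1,\<mu>)).\<close>

definition in_fund_par :: "nat list \<Rightarrow> int list \<Rightarrow> bool" where
  "in_fund_par mu p \<longleftrightarrow> length p = length mu + 1 \<and>
     (\<exists>g :: nat \<Rightarrow> real. (\<forall>i\<le>length mu. 0 \<le> g i \<and> g i < 1) \<and>
        real_of_int (p ! 0) = (\<Sum>i\<le>length mu. g i) \<and>
        (\<forall>j<length mu. real_of_int (p ! Suc j) = g j + g (length mu) * real (mu ! j)))"

definition PP :: "nat list \<Rightarrow> int list set" where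
  "PP mu = {p. in_fund_par mu p}"

definition PP_le :: "nat list \<Rightarrow> int list \<Rightarrow> int list \<Rightarrow> bool" where
  "PP_le mu s t \<longleftrightarrow> s \<in> PP mu \<and> t \<in> PP mu \<and> map2 (\<lambda>a b. a - b) t s \<in> PP mu"

definition PP_iso :: "nat list \<Rightarrow> nat list \<Rightarrow> bool" where
  "PP_iso mu nu \<longleftrightarrow> (\<exists>f. bij_betw f (PP mu) (PP nu) \<and>
     (\<forall>s\<in>PP mu. \<forall>t\<in>PP mu. PP_le mu s t \<longleftrightarrow> PP_le nu (f s) (f t)))"

end

theory Submission
  imports Defs
begin

text \<open>A lattice point p of \<Pi>_\<mu> determines its coefficients: summing the coordinate equations
gives \<gamma>_(d+1) = (p_1 + ... + p_d - p_0) / (n - 1), and then \<gamma>_j = p_j - \<gamma>_(d+1) \<mu>_j.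
For \<mu> = (x, ..., x) of length v every p_j with j \<ge> 1 is therefore the ceiling of \<gamma>_(d+1) x,
so the lattice points are the points (a, c, ..., c), and the conditions 0 \<le> \<gamma> < 1 become
0 \<le> v c - a < x v - 1 and 0 \<le> x a - c < x v - 1. These are invariant under
(x, v, a, c) \<mapsto> (v, x, c, a), and differences of points (a, c, ..., c) have the same shape,
so (a, c, ..., c) \<mapsto> (c, a, ..., a) is an isomorphism of P(\<lambda>) onto P(\<lambda>').\<close>

definition fund_par_coeff :: "nat list \<Rightarrow> int list \<Rightarrow> real" where
  "fund_par_coeff mu p =
     (real_of_int ((\<Sum>j<length mu. p ! Suc j) - p ! 0)) / (real (sum_list mu) - 1)"

lemma sum_fund_par_coeffs:
  assumes "\<forall>j<length mu. real_of_int (p ! Suc j) = g j + g (length mu) * real (mu ! j)"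
  shows "(\<Sum>i\<le>length mu. g i) =
    real_of_int (\<Sum>j<length mu. p ! Suc j) - g (length mu) * (real (sum_list mu) - 1)"
proof -
  have "real_of_int (\<Sum>j<length mu. p ! Suc j) = (\<Sum>j<length mu. g j + g (length mu) * real (mu ! j))"
    using assms by simp
  also have "\<dots> = (\<Sum>j<length mu. g j) + g (length mu) * real (sum_list mu)"
    by (simp add: sum.distrib sum_distrib_left sum_list_sum_nth atLeast0LessThan)
  finally show ?thesis
    by (simp add: lessThan_Suc_atMost[symmetric] algebra_simps)
qed

lemma in_fund_par_iff_coeff:
  assumes "2 \<le> sum_list mu"
  shows "in_fund_par mu p \<longleftrightarrow> length p = length mu + 1 \<and>
    0 \<le> fund_par_coeff mu p \<and> fund_par_coeff mu p < 1 \<and>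
    (\<forall>j<length mu. 0 \<le> real_of_int (p ! Suc j) - fund_par_coeff mu p * real (mu ! j) \<and>
                    real_of_int (p ! Suc j) - fund_par_coeff mu p * real (mu ! j) < 1)"
    (is "_ \<longleftrightarrow> _ \<and> ?coeffs_ok (fund_par_coeff mu p)")
proof -
  let ?d = "length mu" and ?t = "fund_par_coeff mu p"
  have pos: "real (sum_list mu) - 1 > 0"
    using assms by linarith
  have t_unique: "g ?d = ?t"
    if "real_of_int (p ! 0) = (\<Sum>i\<le>?d. g i)"
      and "\<forall>j<?d. real_of_int (p ! Suc j) = g j + g ?d * real (mu ! j)" for g
    using that sum_fund_par_coeffs[OF that(2)] pos
    by (simp add: fund_par_coeff_def field_simps)
  show ?thesis
  proof
    assume "in_fund_par mu p"
    then obtain g where len: "length p = ?d + 1" and bounds: "\<forall>i\<le>?d. 0 \<le> g i \<and> g i < 1"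
      and p0: "real_of_int (p ! 0) = (\<Sum>i\<le>?d. g i)"
      and pj: "\<forall>j<?d. real_of_int (p ! Suc j) = g j + g ?d * real (mu ! j)"
      unfolding in_fund_par_def by blast
    have "g ?d = ?t"
      using t_unique[OF p0 pj] .
    then have "\<forall>j<?d. real_of_int (p ! Suc j) - ?t * real (mu ! j) = g j"
      using pj by simp
    with len bounds \<open>g ?d = ?t\<close> show "length p = ?d + 1 \<and> ?coeffs_ok ?t"
      by (metis le_refl less_imp_le_nat)
  next
    assume "length p = ?d + 1 \<and> ?coeffs_ok ?t"
    then have len: "length p = ?d + 1" and ok: "?coeffs_ok ?t" by auto
    define g where "g i = (if i < ?d then real_of_int (p ! Suc i) - ?t * real (mu ! i) else ?t)" for i
    have pj: "\<forall>j<?d. real_of_int (p ! Suc j) = g j + g ?d * real (mu ! j)"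
      by (simp add: g_def)
    have bounds: "\<forall>i\<le>?d. 0 \<le> g i \<and> g i < 1"
      using ok by (simp add: g_def)
    have "g ?d = ?t" by (simp add: g_def)
    then have "real_of_int (p ! 0) = (\<Sum>i\<le>?d. g i)"
      using sum_fund_par_coeffs[OF pj] pos by (simp add: fund_par_coeff_def field_simps)
    with len bounds pj show "in_fund_par mu p"
      unfolding in_fund_par_def by blast
  qed
qed

text \<open>v c - a and x a - c are (x v - 1) \<gamma>_(d+1) and (x v - 1) \<gamma>_j for the point (a, c, ..., c).\<close>

definition in_diag_par :: "nat \<Rightarrow> nat \<Rightarrow> int \<Rightarrow> int \<Rightarrow> bool" where
  "in_diag_par x v a c \<longleftrightarrow>
     0 \<le> int v * c - a \<and> int v * c - a < int x * int v - 1 \<and>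
     0 \<le> int x * a - c \<and> int x * a - c < int x * int v - 1"

lemma in_diag_par_swap: "in_diag_par v x c a \<longleftrightarrow> in_diag_par x v a c"
  unfolding in_diag_par_def by (auto simp: mult.commute)

lemma in_fund_par_replicate_shape:
  assumes "2 \<le> x * v" and "in_fund_par (replicate v x) p"
  shows "p = p ! 0 # replicate v \<lceil>fund_par_coeff (replicate v x) p * x\<rceil>"
proof -
  let ?t = "fund_par_coeff (replicate v x) p"
  have "2 \<le> sum_list (replicate v x)"
    using assms(1) by (simp add: sum_list_replicate mult.commute)
  with assms(2) have len: "length p = v + 1"
    and near: "\<forall>j<v. 0 \<le> real_of_int (p ! Suc j) - ?t * x \<and> real_of_int (p ! Suc j) - ?t * x < 1"
    by (auto simp: in_fund_par_iff_coeff)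
  have "p ! Suc j = \<lceil>?t * x\<rceil>" if "j < v" for j
    using near that by (intro ceiling_unique[symmetric]) auto
  with len show ?thesis
    by (intro nth_equalityI) (auto simp: nth_Cons split: nat.split)
qed

lemma divide_in_unit_interval_iff:
  assumes "0 < N"
  shows "(0 \<le> real_of_int r / of_int N \<and> real_of_int r / of_int N < 1) \<longleftrightarrow> 0 \<le> r \<and> r < N"
  using assms by (simp add: zero_le_divide_iff divide_less_eq)

lemma in_fund_par_replicate_iff:
  assumes "2 \<le> x * v"
  shows "in_fund_par (replicate v x) (a # replicate v c) \<longleftrightarrow> in_diag_par x v a c"
proof -
  define N where "N = int x * int v - 1"
  define t where "t = fund_par_coeff (replicate v x) (a # replicate v c)"
  have N_pos: "0 < N"
    using assms unfolding N_def by (simp flip: of_nat_mult)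
  have "v > 0" using assms by (cases v) auto
  have "2 \<le> sum_list (replicate v x)"
    using assms by (simp add: sum_list_replicate mult.commute)
  then have "in_fund_par (replicate v x) (a # replicate v c) \<longleftrightarrow>
      (0 \<le> t \<and> t < 1) \<and> (0 \<le> c - t * x \<and> c - t * x < 1)"
    using \<open>v > 0\<close> by (auto simp: in_fund_par_iff_coeff t_def)
  moreover have t: "t = of_int (v * c - a) / of_int N"
    by (simp add: t_def fund_par_coeff_def N_def sum_list_replicate mult.commute)
  moreover have "c - t * x = of_int (x * a - c) / of_int N"
  proof -
    have "real_of_int (x * a - c) = c * of_int N - of_int (v * c - a) * x"
      by (simp add: N_def algebra_simps)
    then show ?thesis
      using N_pos by (simp add: t field_simps)
  qed
  ultimately have "in_fund_par (replicate v x) (a # replicate v c) \<longleftrightarrow>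
      (0 \<le> v * c - a \<and> v * c - a < N) \<and> (0 \<le> x * a - c \<and> x * a - c < N)"
    by (simp only: divide_in_unit_interval_iff[OF N_pos])
  then show ?thesis
    by (simp add: in_diag_par_def N_def)
qed

lemma PP_replicate:
  assumes "2 \<le> x * v"
  shows "PP (replicate v x) = {a # replicate v c | a c. in_diag_par x v a c}"
  using in_fund_par_replicate_shape[OF assms] in_fund_par_replicate_iff[OF assms]
  unfolding PP_def by (metis (no_types, lifting))

lemma map2_diff_replicate:
  "map2 (\<lambda>a b. a - b) (a' # replicate v c') (a # replicate v c) = (a' - a) # replicate v (c' - c :: int)"
  by (simp add: zip_replicate)

lemma PP_le_replicate_iff:
  assumes "2 \<le> x * v"
  shows "PP_le (replicate v x) (a # replicate v c) (a' # replicate v c') \<longleftrightarrow>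
    in_diag_par x v a c \<and> in_diag_par x v a' c' \<and> in_diag_par x v (a' - a) (c' - c)"
  using in_fund_par_replicate_iff[OF assms]
  by (simp add: PP_le_def PP_def map2_diff_replicate)

definition swap_diag :: "nat \<Rightarrow> int list \<Rightarrow> int list" where
  "swap_diag x p = p ! 1 # replicate x (p ! 0)"

lemma swap_diag_Cons_replicate [simp]:
  "0 < v \<Longrightarrow> swap_diag x (a # replicate v c) = c # replicate x a"
  by (simp add: swap_diag_def)

lemma swap_diag_in_PP:
  assumes "2 \<le> x * v" and "p \<in> PP (replicate v x)"
  shows "swap_diag x p \<in> PP (replicate x v)"
proof -
  have "0 < v" "2 \<le> v * x" using assms(1) by (auto simp: mult.commute intro: Nat.gr0I)
  then show ?thesis
    using assms(2) PP_replicate[OF assms(1)] PP_replicate[OF \<open>2 \<le> v * x\<close>]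
    by (auto simp: in_diag_par_swap)
qed

lemma bij_betw_swap_diag_PP:
  assumes "2 \<le> x * v"
  shows "bij_betw (swap_diag x) (PP (replicate v x)) (PP (replicate x v))"
proof (rule bij_betw_byWitness[where f' = "swap_diag v"])
  have "0 < v" "0 < x" "2 \<le> v * x" using assms by (auto simp: mult.commute intro: Nat.gr0I)
  show "\<forall>p\<in>PP (replicate v x). swap_diag v (swap_diag x p) = p"
    using PP_replicate[OF assms] \<open>0 < v\<close> \<open>0 < x\<close> by auto
  show "\<forall>p\<in>PP (replicate x v). swap_diag x (swap_diag v p) = p"
    using PP_replicate[OF \<open>2 \<le> v * x\<close>] \<open>0 < v\<close> \<open>0 < x\<close> by auto
  show "swap_diag x ` PP (replicate v x) \<subseteq> PP (replicate x v)"
    using swap_diag_in_PP[OF assms] by blast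
  show "swap_diag v ` PP (replicate x v) \<subseteq> PP (replicate v x)"
    using swap_diag_in_PP[OF \<open>2 \<le> v * x\<close>] by blast
qed

theorem corollary4p2:
  fixes x v :: nat
  assumes "0 < x" and "0 < v" and "x * v \<ge> 2"
  shows "PP_iso (replicate v x) (replicate x v)"
  unfolding PP_iso_def
proof (intro exI conjI ballI)
  have "2 \<le> v * x" using assms(3) by (simp add: mult.commute)
  show "bij_betw (swap_diag x) (PP (replicate v x)) (PP (replicate x v))"
    using bij_betw_swap_diag_PP[OF assms(3)] .
  fix s t assume "s \<in> PP (replicate v x)" "t \<in> PP (replicate v x)"
  then obtain a c a' c' where "s = a # replicate v c" "t = a' # replicate v c'"
    using PP_replicate[OF assms(3)] by blast
  then show "PP_le (replicate v x) s t \<longleftrightarrow> PP_le (replicate x v) (swap_diag x s) (swap_diag x t)"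
    using PP_le_replicate_iff[OF assms(3)] PP_le_replicate_iff[OF \<open>2 \<le> v * x\<close>] assms(2)
    by (simp add: in_diag_par_swap)
qed

end
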